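(* Let $c\ge 0$, $m\ge 2$, and let $x=((x^1,n_1),\dots,(x^q,n_q))$ be a profile with $q\ge 2$. Suppose candidate $i$ is located at $x^l$ and $n_l=2$. Then $$v_i(x^{l-},x_{-i})+v_i(x^{l+},x_{-i})=2v_i(x).$$ In particular, if $x$ is a non-convergent Nash equilibrium of the rule $s=(c,m)$, then $v_i(x^{l-},x_{-i})=v_i(x^{l+},x_{-i})=v_i(x)$.
   Context: Setting: voters' ideal points are distributed uniformly (unit mass, Lebesgue measure) on $[0,1]$. There are $m$ candidates; a profile is $x=(x_1,\dots,x_m)\in[0,1]^m$. A voter with ideal point $y$ ranks candidates by distance $|x_i-y|$ (closer is better); ties are broken by a fair lottery (uniformly random strict order among tied candidates). Under the best-worst rule $s=(c,m)$ ($c\ge0$), a candidate receives $1$ point from each voter ranking her first, $-c$ from each voter ranking her last ($m$-th), and $0$ otherwise; $v_i(x)$ is candidate $i$'s expected total points. $(t,x_{-i})$ denotes $x$ with $x_i$ replaced by $t$. For a point $p$, $v_i(p^-,x_{-i}):=\lim_{t\uparrow p}v_i(t,x_{-i})$ and $v_i(p^+,x_{-i}):=\lim_{t\downarrow p}v_i(t,x_{-i})$ (scores after an infinitesimal move just left, resp. right, of $p$). A (pure-strategy Nash) equilibrium is a profile $x^*$ with $v_i(x^* )\ge v_i(t,x^*_{-i})$ for all $i$ and $t\in[0,1]$; it is non-convergent if at least two platforms are distinct. A profile determines its distinct occupied positions $x^1<\dots<x^q$, with $n_j$ the number of candidates at $x^j$; we write $x=((x^1,n_1),\dots,(x^q,n_q))$.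 *)

theory Defs
  imports "HOL-Analysis.Analysis"
begin

text \<open>Candidates are indexed by 0,...,m-1; a profile is a function x :: nat => real
  (only the values at indices < m matter). Voters are uniform on [0,1].\<close>

definition closest :: "nat \<Rightarrow> (nat \<Rightarrow> real) \<Rightarrow> real \<Rightarrow> nat set" where
  "closest m x y = {j. j < m \<and> (\<forall>k<m. \<bar>x j - y\<bar> \<le> \<bar>x k - y\<bar>)}"

definition farthest :: "nat \<Rightarrow> (nat \<Rightarrow> real) \<Rightarrow> real \<Rightarrow> nat set" where
  "farthest m x y = {j. j < m \<and> (\<forall>k<m. \<bar>x k - y\<bar> \<le> \<bar>x j - y\<bar>)}"

text \<open>Expected points voter y gives candidate i under the best-worst rule (c,m) with
  fair-lottery tie-breaking: probability of being ranked first is 1/|closest| if i is among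
  the closest, probability of being ranked last is 1/|farthest| if i is among the farthest.\<close>
definition voter_points :: "real \<Rightarrow> nat \<Rightarrow> (nat \<Rightarrow> real) \<Rightarrow> nat \<Rightarrow> real \<Rightarrow> real" where
  "voter_points c m x i y =
     (if i \<in> closest m x y then 1 / real (card (closest m x y)) else 0)
     - c * (if i \<in> farthest m x y then 1 / real (card (farthest m x y)) else 0)"

definition score :: "real \<Rightarrow> nat \<Rightarrow> (nat \<Rightarrow> real) \<Rightarrow> nat \<Rightarrow> real" where
  "score c m x i = integral {0..1} (voter_points c m x i)"

definition is_profile :: "nat \<Rightarrow> (nat \<Rightarrow> real) \<Rightarrow> bool" where
  "is_profile m x \<longleftrightarrow> (\<forall>j<m. x j \<in> {0..1})"

definition nash_eq :: "real \<Rightarrow> nat \<Rightarrow> (nat \<Rightarrow> real) \<Rightarrow> bool" where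
  "nash_eq c m x \<longleftrightarrow> is_profile m x \<and>
     (\<forall>j<m. \<forall>t\<in>{0..1}. score c m (x(j := t)) j \<le> score c m x j)"

definition non_convergent :: "nat \<Rightarrow> (nat \<Rightarrow> real) \<Rightarrow> bool" where
  "non_convergent m x \<longleftrightarrow> (\<exists>j<m. \<exists>k<m. x j \<noteq> x k)"

end

theory Submission
  imports Defs
begin

text \<open>Moving candidate \<open>i\<close> an infinitesimal step off its twin breaks their tie. Voters on the
  side towards which \<open>i\<close> moves now give it the whole first place whenever the pair was closest,
  and no last place; voters on the other side give it the whole last place whenever the pair was
  farthest, and no first place. Before the move the twins shared both ranks half and half, so for
  all voters outside a finite set the limit points from the left and from the right average to
  the current points; dominated convergence turns this into the identity for the scores. At a Nash
  equilibrium neither one-sided limit exceeds \<open>v\<^sub>i(x)\<close> (at an endpoint of \<open>[0,1]\<close>, where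
  one side is unavailable, compare the two limit integrands directly), so both equal it.\<close>

lemma dominated_convergence_ae:
  fixes f :: "nat \<Rightarrow> real \<Rightarrow> real"
  assumes f: "\<And>n. f n integrable_on {a..b}" and bound: "\<And>n y. \<bar>f n y\<bar> \<le> B"
    and E: "negligible E"
    and conv: "\<And>y. y \<in> {a..b} - E \<Longrightarrow> (\<lambda>n. f n y) \<longlonglongrightarrow> g y"
  shows "g integrable_on {a..b}" and "(\<lambda>n. integral {a..b} (f n)) \<longlonglongrightarrow> integral {a..b} g"
proof -
  define f' where "f' n y = (if y \<in> E then 0 else f n y)" for n y
  define g' where "g' y = (if y \<in> E then 0 else g y)" for y
  have f': "f' n integrable_on {a..b}" for n
    by (rule integrable_spike[OF f E]) (simp add: f'_def)
  have dom: "norm (f' n y) \<le> B" for n y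
    using bound[of n y] order_trans[OF abs_ge_zero bound] by (simp add: f'_def)
  have lim_pointwise: "(\<lambda>n. f' n y) \<longlonglongrightarrow> g' y" if "y \<in> {a..b}" for y
    using conv[of y] that by (simp add: f'_def g'_def)
  note lim = dominated_convergence[OF f' integrable_const_ivl dom lim_pointwise]
  show "g integrable_on {a..b}"
    by (rule integrable_spike[OF lim(1) E]) (auto simp: g'_def)
  have "integral {a..b} (f' n) = integral {a..b} (f n)" for n
    by (rule integral_spike[OF E]) (simp add: f'_def)
  moreover have "integral {a..b} g' = integral {a..b} g"
    by (rule integral_spike[OF E]) (auto simp: g'_def)
  ultimately show "(\<lambda>n. integral {a..b} (f n)) \<longlonglongrightarrow> integral {a..b} g"
    using lim(2) by simp
qed

lemma dominated_convergence_ae_at_within: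
  fixes f :: "real \<Rightarrow> real \<Rightarrow> real"
  assumes nontriv: "\<not> trivial_limit (at p within S)"
    and f: "\<And>t. f t integrable_on {a..b}" and bound: "\<And>t y. \<bar>f t y\<bar> \<le> B"
    and E: "negligible E"
    and ev: "\<And>y. y \<in> {a..b} - E \<Longrightarrow> \<forall>\<^sub>F t in at p within S. f t y = g y"
  shows "g integrable_on {a..b}"
    and "((\<lambda>t. integral {a..b} (f t)) \<longlongrightarrow> integral {a..b} g) (at p within S)"
proof -
  have seq: "g integrable_on {a..b} \<and> (\<lambda>n. integral {a..b} (f (X n))) \<longlonglongrightarrow> integral {a..b} g"
    if "\<forall>n. X n \<in> S - {p}" "X \<longlonglongrightarrow> p" for X
  proof -
    have X: "filterlim X (at p within S) sequentially"
      using that by (auto simp: filterlim_at)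
    have "(\<lambda>n. f (X n) y) \<longlonglongrightarrow> g y" if "y \<in> {a..b} - E" for y
      by (rule tendsto_eventually[OF eventually_compose_filterlim[OF ev[OF that] X]])
    with dominated_convergence_ae[OF f bound E] show ?thesis by blast
  qed
  from nontriv obtain X where "\<forall>n. X n \<in> S - {p}" "X \<longlonglongrightarrow> p"
    by (auto simp: trivial_limit_within islimpt_sequential)
  with seq show "g integrable_on {a..b}" by blast
  show "((\<lambda>t. integral {a..b} (f t)) \<longlongrightarrow> integral {a..b} g) (at p within S)"
    unfolding tendsto_at_iff_sequentially o_def using seq by blast
qed

lemma eventually_same_side:
  fixes l a :: real
  assumes f: "(f \<longlongrightarrow> l) F" and "a \<noteq> l"
  shows "\<forall>\<^sub>F t in F. (a < f t \<longleftrightarrow> a < l) \<and> (f t < a \<longleftrightarrow> l < a)"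
proof (cases "a < l")
  case True
  from order_tendstoD(1)[OF f True] show ?thesis by eventually_elim (use True in auto)
next
  case False
  with \<open>a \<noteq> l\<close> have "l < a" by simp
  from order_tendstoD(2)[OF f this] show ?thesis by eventually_elim (use \<open>l < a\<close> in auto)
qed

lemma eventually_distance_order_preserved:
  fixes p y :: real and m :: nat
  shows "\<forall>\<^sub>F t in at p within S. \<forall>j<m. \<bar>x j - y\<bar> \<noteq> \<bar>p - y\<bar> \<longrightarrow>
     (\<bar>x j - y\<bar> < \<bar>t - y\<bar> \<longleftrightarrow> \<bar>x j - y\<bar> < \<bar>p - y\<bar>) \<and> (\<bar>t - y\<bar> < \<bar>x j - y\<bar> \<longleftrightarrow> \<bar>p - y\<bar> < \<bar>x j - y\<bar>)"
proof -
  have "((\<lambda>t. \<bar>t - y\<bar>) \<longlongrightarrow> \<bar>p - y\<bar>) (at p within S)"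
    by (intro tendsto_intros tendsto_ident_at)
  then have "\<forall>j\<in>{..<m}. \<forall>\<^sub>F t in at p within S. \<bar>x j - y\<bar> \<noteq> \<bar>p - y\<bar> \<longrightarrow>
     (\<bar>x j - y\<bar> < \<bar>t - y\<bar> \<longleftrightarrow> \<bar>x j - y\<bar> < \<bar>p - y\<bar>) \<and> (\<bar>t - y\<bar> < \<bar>x j - y\<bar> \<longleftrightarrow> \<bar>p - y\<bar> < \<bar>x j - y\<bar>)"
    by (auto intro: eventually_same_side)
  from eventually_ball_finite[OF _ this] show ?thesis
    by (rule eventually_mono) auto
qed

definition minimizers :: "nat \<Rightarrow> (nat \<Rightarrow> real) \<Rightarrow> nat set" where
  "minimizers m d = {j. j < m \<and> (\<forall>k<m. d j \<le> d k)}"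

lemma minimizers_eq_level_set:
  assumes "i \<in> minimizers m d"
  shows "minimizers m d = {j. j < m \<and> d j = d i}"
proof (intro set_eqI iffI)
  fix j assume "j \<in> minimizers m d"
  with assms have "j < m" "d j \<le> d i" "d i \<le> d j" unfolding minimizers_def by blast+
  then show "j \<in> {j. j < m \<and> d j = d i}" by simp
next
  fix j assume "j \<in> {j. j < m \<and> d j = d i}"
  with assms show "j \<in> minimizers m d" unfolding minimizers_def by simp
qed

lemma minimizers_update_below:
  assumes i: "i < m" and s: "s < d i"
    and gap: "\<forall>j<m. d j \<noteq> d i \<longrightarrow> (d j < s \<longleftrightarrow> d j < d i)"
  shows minimizers_update_below_iff: "i \<in> minimizers m (d(i := s)) \<longleftrightarrow> i \<in> minimizers m d"
    and minimizers_update_below_eq: "i \<in> minimizers m (d(i := s)) \<Longrightarrow> minimizers m (d(i := s)) = {i}"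
proof -
  have "s \<le> d l \<longleftrightarrow> d i \<le> d l" if "l < m" for l
  proof (cases "d l = d i")
    case False
    with gap \<open>l < m\<close> have "d l < s \<longleftrightarrow> d l < d i" by blast
    then show ?thesis by (meson not_less)
  qed (use s in simp)
  then show "i \<in> minimizers m (d(i := s)) \<longleftrightarrow> i \<in> minimizers m d"
    using i by (simp add: minimizers_def) (metis order_refl)
next
  assume i_min: "i \<in> minimizers m (d(i := s))"
  have "j = i" if j_min: "j \<in> minimizers m (d(i := s))" for j
  proof (rule ccontr)
    assume "j \<noteq> i"
    with j_min i have "j < m" "d j \<le> s" by (auto simp: minimizers_def)
    moreover from i_min \<open>j < m\<close> \<open>j \<noteq> i\<close> have "s \<le> d j" by (auto simp: minimizers_def)
    ultimately show False using gap s by force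
  qed
  with i_min show "minimizers m (d(i := s)) = {i}" by blast
qed

lemma not_in_minimizers_update_above:
  assumes "k < m" "k \<noteq> i" "d k < s"
  shows "i \<notin> minimizers m (d(i := s))"
proof
  assume "i \<in> minimizers m (d(i := s))"
  then have "(d(i := s)) i \<le> (d(i := s)) k"
    using \<open>k < m\<close> unfolding minimizers_def by blast
  with assms show False by simp
qed

lemma real_card_eq_sum: "real (card {j. j < (m::nat) \<and> P j}) = (\<Sum>j<m. if P j then 1 else 0)"
proof -
  have "{j. j < m \<and> P j} = {j\<in>{..<m}. P j}" by auto
  then have "real (card {j. j < m \<and> P j}) = (\<Sum>j\<in>{j\<in>{..<m}. P j}. 1)" by simp
  also have "\<dots> = (\<Sum>j<m. if P j then 1 else 0)" by (rule sum.inter_filter) simp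
  finally show ?thesis .
qed

lemma voter_points_borel_measurable: "voter_points c m x i \<in> borel_measurable borel"
proof -
  have eq: "voter_points c m x i = (\<lambda>y.
      (if i < m \<and> (\<forall>k<m. \<bar>x i - y\<bar> \<le> \<bar>x k - y\<bar>)
       then 1 / (\<Sum>j<m. if \<forall>k<m. \<bar>x j - y\<bar> \<le> \<bar>x k - y\<bar> then 1 else 0) else 0)
    - c * (if i < m \<and> (\<forall>k<m. \<bar>x k - y\<bar> \<le> \<bar>x i - y\<bar>)
       then 1 / (\<Sum>j<m. if \<forall>k<m. \<bar>x k - y\<bar> \<le> \<bar>x j - y\<bar> then 1 else 0) else 0))"
    unfolding voter_points_def closest_def farthest_def
    by (auto simp: real_card_eq_sum[symmetric] intro!: ext)
  show ?thesis unfolding eq by measurable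
qed

lemma abs_voter_points_le: "\<bar>voter_points c m x i y\<bar> \<le> 1 + \<bar>c\<bar>"
proof -
  have share: "0 \<le> 1 / real n \<and> 1 / real n \<le> (1::real)" for n
    by (cases n) (auto simp: divide_simps)
  have "\<bar>c * (if i \<in> farthest m x y then 1 / real (card (farthest m x y)) else 0)\<bar> \<le> \<bar>c\<bar>"
    using share[of "card (farthest m x y)"] by (auto simp: abs_mult mult_left_le)
  moreover have "\<bar>if i \<in> closest m x y then 1 / real (card (closest m x y)) else 0\<bar> \<le> 1"
    using share[of "card (closest m x y)"] by auto
  ultimately show ?thesis unfolding voter_points_def by linarith
qed

lemma voter_points_integrable: "voter_points c m x i integrable_on {a..b}"
proof (rule measurable_bounded_by_integrable_imp_integrable[where g = "\<lambda>_. 1 + \<bar>c\<bar>"])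
  show "voter_points c m x i \<in> borel_measurable (lebesgue_on {a..b})"
    by (rule measurable_restrict_space1, rule measurable_completion)
      (simp add: voter_points_borel_measurable)
qed (auto simp: abs_voter_points_le)

lemma closest_eq_minimizers: "closest m x y = minimizers m (\<lambda>j. \<bar>x j - y\<bar>)"
  by (simp add: closest_def minimizers_def)

lemma farthest_eq_minimizers: "farthest m x y = minimizers m (\<lambda>j. - \<bar>x j - y\<bar>)"
  by (simp add: farthest_def minimizers_def)

text \<open>The points \<open>i\<close> would receive from \<open>y\<close> if it held the first (last) rank alone instead
  of sharing it with its twin.\<close>

definition first_points :: "nat \<Rightarrow> (nat \<Rightarrow> real) \<Rightarrow> nat \<Rightarrow> real \<Rightarrow> real" where
  "first_points m x i y = (if i \<in> closest m x y then 1 else 0)"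

definition last_points :: "real \<Rightarrow> nat \<Rightarrow> (nat \<Rightarrow> real) \<Rightarrow> nat \<Rightarrow> real \<Rightarrow> real" where
  "last_points c m x i y = - c * (if i \<in> farthest m x y then 1 else 0)"

lemma voter_points_move_closer:
  assumes i: "i < m" and twin: "k < m" "k \<noteq> i" "x k = x i"
    and closer: "\<bar>t - y\<bar> < \<bar>x i - y\<bar>"
    and gap: "\<forall>j<m. \<bar>x j - y\<bar> \<noteq> \<bar>x i - y\<bar> \<longrightarrow>
                (\<bar>x j - y\<bar> < \<bar>t - y\<bar> \<longleftrightarrow> \<bar>x j - y\<bar> < \<bar>x i - y\<bar>)"
  shows "voter_points c m (x(i := t)) i y = first_points m x i y"
proof -
  let ?d = "\<lambda>j. \<bar>x j - y\<bar>"
  have closest: "closest m (x(i := t)) y = minimizers m (?d(i := \<bar>t - y\<bar>))"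
    unfolding closest_eq_minimizers by (rule arg_cong[where f = "minimizers m"]) auto
  have "farthest m (x(i := t)) y = minimizers m ((\<lambda>j. - ?d j)(i := - \<bar>t - y\<bar>))"
    unfolding farthest_eq_minimizers by (rule arg_cong[where f = "minimizers m"]) auto
  then have not_last: "i \<notin> farthest m (x(i := t)) y"
    using not_in_minimizers_update_above[of k m i] twin closer by simp
  note min = minimizers_update_below[of i m "\<bar>t - y\<bar>" ?d, OF i closer gap]
  have "i \<in> closest m (x(i := t)) y \<longleftrightarrow> i \<in> closest m x y"
    unfolding closest closest_eq_minimizers[of m x] by (rule min(1))
  moreover have "i \<in> closest m (x(i := t)) y \<Longrightarrow> closest m (x(i := t)) y = {i}"
    unfolding closest by (rule min(2))
  ultimately show ?thesis
    using not_last by (auto simp: voter_points_def first_points_def)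
qed

lemma voter_points_move_farther:
  assumes i: "i < m" and twin: "k < m" "k \<noteq> i" "x k = x i"
    and farther: "\<bar>x i - y\<bar> < \<bar>t - y\<bar>"
    and gap: "\<forall>j<m. \<bar>x j - y\<bar> \<noteq> \<bar>x i - y\<bar> \<longrightarrow>
                (\<bar>t - y\<bar> < \<bar>x j - y\<bar> \<longleftrightarrow> \<bar>x i - y\<bar> < \<bar>x j - y\<bar>)"
  shows "voter_points c m (x(i := t)) i y = last_points c m x i y"
proof -
  let ?d = "\<lambda>j. - \<bar>x j - y\<bar>"
  have farthest: "farthest m (x(i := t)) y = minimizers m (?d(i := - \<bar>t - y\<bar>))"
    unfolding farthest_eq_minimizers by (rule arg_cong[where f = "minimizers m"]) auto
  have "closest m (x(i := t)) y = minimizers m ((\<lambda>j. \<bar>x j - y\<bar>)(i := \<bar>t - y\<bar>))"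
    unfolding closest_eq_minimizers by (rule arg_cong[where f = "minimizers m"]) auto
  then have not_first: "i \<notin> closest m (x(i := t)) y"
    using not_in_minimizers_update_above[of k m i] twin farther by simp
  have "- \<bar>t - y\<bar> < ?d i" using farther by simp
  note min = minimizers_update_below[of i m "- \<bar>t - y\<bar>" ?d, OF i this]
  have "i \<in> farthest m (x(i := t)) y \<longleftrightarrow> i \<in> farthest m x y"
    unfolding farthest farthest_eq_minimizers[of m x] by (rule min(1)) (use gap in auto)
  moreover have "i \<in> farthest m (x(i := t)) y \<Longrightarrow> farthest m (x(i := t)) y = {i}"
    unfolding farthest by (rule min(2)) (use gap in auto)
  ultimately show ?thesis
    using not_first by (auto simp: voter_points_def last_points_def)
qed

lemma voter_points_twins:
  assumes twins: "card {j. j < m \<and> x j = x i} = 2"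
    and generic: "\<forall>j<m. x j \<noteq> x i \<longrightarrow> \<bar>x j - y\<bar> \<noteq> \<bar>x i - y\<bar>"
  shows "voter_points c m x i y = (first_points m x i y + last_points c m x i y) / 2"
proof -
  have level: "{j. j < m \<and> \<bar>x j - y\<bar> = \<bar>x i - y\<bar>} = {j. j < m \<and> x j = x i}"
    using generic by auto
  have closest: "closest m x y = {j. j < m \<and> x j = x i}" if "i \<in> closest m x y"
    using minimizers_eq_level_set[OF that[unfolded closest_eq_minimizers]] level
    by (simp add: closest_eq_minimizers)
  have farthest: "farthest m x y = {j. j < m \<and> x j = x i}" if "i \<in> farthest m x y"
    using minimizers_eq_level_set[OF that[unfolded farthest_eq_minimizers]] level
    by (simp add: farthest_eq_minimizers)
  show ?thesis
    unfolding voter_points_def first_points_def last_points_def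
    by (cases "i \<in> closest m x y"; cases "i \<in> farthest m x y") (simp_all add: closest farthest twins)
qed

lemma negligible_equidistant:
  fixes x :: "nat \<Rightarrow> real" and m :: nat
  shows "negligible {y. \<exists>j<m. x j \<noteq> p \<and> \<bar>x j - y\<bar> = \<bar>p - y\<bar>}"
proof (rule negligible_subset[OF negligible_finite])
  show "finite ((\<lambda>j. (x j + p) / 2) ` {..<m})" by simp
  show "{y. \<exists>j<m. x j \<noteq> p \<and> \<bar>x j - y\<bar> = \<bar>p - y\<bar>} \<subseteq> (\<lambda>j. (x j + p) / 2) ` {..<m}"
  proof
    fix y assume "y \<in> {y. \<exists>j<m. x j \<noteq> p \<and> \<bar>x j - y\<bar> = \<bar>p - y\<bar>}"
    then obtain j where "j < m" "x j \<noteq> p" "\<bar>x j - y\<bar> = \<bar>p - y\<bar>" by blast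
    then have "y = (x j + p) / 2" by (auto simp: abs_eq_iff)
    with \<open>j < m\<close> show "y \<in> (\<lambda>j. (x j + p) / 2) ` {..<m}" by blast
  qed
qed

definition left_limit_points :: "real \<Rightarrow> nat \<Rightarrow> (nat \<Rightarrow> real) \<Rightarrow> nat \<Rightarrow> real \<Rightarrow> real" where
  "left_limit_points c m x i y = (if y < x i then first_points m x i y else last_points c m x i y)"

definition right_limit_points :: "real \<Rightarrow> nat \<Rightarrow> (nat \<Rightarrow> real) \<Rightarrow> nat \<Rightarrow> real \<Rightarrow> real" where
  "right_limit_points c m x i y = (if x i < y then first_points m x i y else last_points c m x i y)"

lemma eventually_voter_points_at_left:
  assumes i: "i < m" and twin: "k < m" "k \<noteq> i" "x k = x i"
  shows "\<forall>\<^sub>F t in at_left (x i). voter_points c m (x(i := t)) i y = left_limit_points c m x i y"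
proof (cases "y < x i")
  case True
  from eventually_conj[OF eventually_distance_order_preserved[where p = "x i" and x = x and y = y and m = m]
      eventually_at_left_real[OF True]]
  show ?thesis
  proof eventually_elim
    case (elim t)
    with True have "\<bar>t - y\<bar> < \<bar>x i - y\<bar>" by auto
    from voter_points_move_closer[OF i twin this] elim True show ?case
      by (auto simp: left_limit_points_def)
  qed
next
  case False
  have "x i - 1 < x i" by simp
  from eventually_conj[OF eventually_distance_order_preserved[where p = "x i" and x = x and y = y and m = m]
      eventually_at_left_real[OF this]]
  show ?thesis
  proof eventually_elim
    case (elim t)
    with False have "\<bar>x i - y\<bar> < \<bar>t - y\<bar>" by auto
    from voter_points_move_farther[OF i twin this] elim False show ?case
      by (auto simp: left_limit_points_def)
  qed
qed

lemma eventually_voter_points_at_right: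
  assumes i: "i < m" and twin: "k < m" "k \<noteq> i" "x k = x i"
  shows "\<forall>\<^sub>F t in at_right (x i). voter_points c m (x(i := t)) i y = right_limit_points c m x i y"
proof (cases "x i < y")
  case True
  from eventually_conj[OF eventually_distance_order_preserved[where p = "x i" and x = x and y = y and m = m]
      eventually_at_right_real[OF True]]
  show ?thesis
  proof eventually_elim
    case (elim t)
    with True have "\<bar>t - y\<bar> < \<bar>x i - y\<bar>" by auto
    from voter_points_move_closer[OF i twin this] elim True show ?case
      by (auto simp: right_limit_points_def)
  qed
next
  case False
  have "x i < x i + 1" by simp
  from eventually_conj[OF eventually_distance_order_preserved[where p = "x i" and x = x and y = y and m = m]
      eventually_at_right_real[OF this]]
  show ?thesis
  proof eventually_elim
    case (elim t)
    with False have "\<bar>x i - y\<bar> < \<bar>t - y\<bar>" by auto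
    from voter_points_move_farther[OF i twin this] elim False show ?case
      by (auto simp: right_limit_points_def)
  qed
qed

lemma score_tendsto_at_left:
  assumes "i < m" "k < m" "k \<noteq> i" "x k = x i"
  shows "left_limit_points c m x i integrable_on {0..1}"
    and "((\<lambda>t. score c m (x(i := t)) i) \<longlongrightarrow> integral {0..1} (left_limit_points c m x i))
           (at_left (x i))"
  using dominated_convergence_ae_at_within[where f = "\<lambda>t. voter_points c m (x(i := t)) i",
      OF trivial_limit_at_left_real voter_points_integrable abs_voter_points_le negligible_empty
         eventually_voter_points_at_left[OF assms]]
  by (simp_all add: score_def)

lemma score_tendsto_at_right:
  assumes "i < m" "k < m" "k \<noteq> i" "x k = x i"
  shows "right_limit_points c m x i integrable_on {0..1}"
    and "((\<lambda>t. score c m (x(i := t)) i) \<longlongrightarrow> integral {0..1} (right_limit_points c m x i))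
           (at_right (x i))"
  using dominated_convergence_ae_at_within[where f = "\<lambda>t. voter_points c m (x(i := t)) i",
      OF trivial_limit_at_right_real voter_points_integrable abs_voter_points_le negligible_empty
         eventually_voter_points_at_right[OF assms]]
  by (simp_all add: score_def)

lemma integral_limit_points_sum:
  assumes twins: "card {j. j < m \<and> x j = x i} = 2"
    and L: "left_limit_points c m x i integrable_on {0..1}"
    and R: "right_limit_points c m x i integrable_on {0..1}"
  shows "integral {0..1} (left_limit_points c m x i) + integral {0..1} (right_limit_points c m x i)
         = 2 * score c m x i"
proof -
  let ?E = "insert (x i) {y. \<exists>j<m. x j \<noteq> x i \<and> \<bar>x j - y\<bar> = \<bar>x i - y\<bar>}"
  have "negligible ?E" by (simp add: negligible_equidistant)
  have "integral {0..1} (left_limit_points c m x i) + integral {0..1} (right_limit_points c m x i)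
        = integral {0..1} (\<lambda>y. left_limit_points c m x i y + right_limit_points c m x i y)"
    by (rule integral_add[OF L R, symmetric])
  also have "\<dots> = integral {0..1} (\<lambda>y. 2 *\<^sub>R voter_points c m x i y)"
  proof (rule integral_spike[OF \<open>negligible ?E\<close>])
    fix y assume y: "y \<in> {0..1} - ?E"
    then have "voter_points c m x i y = (first_points m x i y + last_points c m x i y) / 2"
      by (intro voter_points_twins[OF twins]) auto
    with y show
      "2 *\<^sub>R voter_points c m x i y = left_limit_points c m x i y + right_limit_points c m x i y"
      by (auto simp: left_limit_points_def right_limit_points_def)
  qed
  also have "\<dots> = 2 * score c m x i" by (simp add: score_def)
  finally show ?thesis .
qed

lemma left_limit_points_le_right:
  assumes "0 \<le> c" "x i \<le> y"
  shows "left_limit_points c m x i y \<le> right_limit_points c m x i y"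
  using assms
  by (simp add: left_limit_points_def right_limit_points_def first_points_def last_points_def)

lemma right_limit_points_le_left:
  assumes "0 \<le> c" "y \<le> x i"
  shows "right_limit_points c m x i y \<le> left_limit_points c m x i y"
  using assms
  by (simp add: left_limit_points_def right_limit_points_def first_points_def last_points_def)

lemma nash_eq_limit_at_left_le:
  assumes nash: "nash_eq c m x" and i: "i < m" and pos: "0 < x i"
    and lim: "((\<lambda>t. score c m (x(i := t)) i) \<longlongrightarrow> a) (at_left (x i))"
  shows "a \<le> score c m x i"
proof (rule tendsto_upperbound[OF lim _ trivial_limit_at_left_real])
  have "x i \<le> 1" using nash i unfolding nash_eq_def is_profile_def by auto
  from eventually_at_left_real[OF pos]
  show "\<forall>\<^sub>F t in at_left (x i). score c m (x(i := t)) i \<le> score c m x i"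
  proof eventually_elim
    case (elim t)
    with \<open>x i \<le> 1\<close> have "t \<in> {0..1}" by auto
    with nash i show ?case unfolding nash_eq_def by blast
  qed
qed

lemma nash_eq_limit_at_right_le:
  assumes nash: "nash_eq c m x" and i: "i < m" and lt1: "x i < 1"
    and lim: "((\<lambda>t. score c m (x(i := t)) i) \<longlongrightarrow> a) (at_right (x i))"
  shows "a \<le> score c m x i"
proof (rule tendsto_upperbound[OF lim _ trivial_limit_at_right_real])
  have "0 \<le> x i" using nash i unfolding nash_eq_def is_profile_def by auto
  from eventually_at_right_real[OF lt1]
  show "\<forall>\<^sub>F t in at_right (x i). score c m (x(i := t)) i \<le> score c m x i"
  proof eventually_elim
    case (elim t)
    with \<open>0 \<le> x i\<close> have "t \<in> {0..1}" by auto
    with nash i show ?case unfolding nash_eq_def by blast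
  qed
qed

lemma twin_exists:
  assumes "i < m" and "card {j. j < m \<and> x j = x i} = 2"
  obtains k where "k < m" "k \<noteq> i" "x k = x i"
proof -
  have "{j. j < m \<and> x j = x i} \<noteq> {i}"
  proof
    assume "{j. j < m \<and> x j = x i} = {i}"
    with assms(2) show False by simp
  qed
  with assms(1) that show ?thesis by blast
qed

lemma nash_eq_left_limit_le_score:
  assumes c: "0 \<le> c" and nash: "nash_eq c m x" and i: "i < m"
    and twins: "card {j. j < m \<and> x j = x i} = 2"
  shows "integral {0..1} (left_limit_points c m x i) \<le> score c m x i"
proof -
  obtain k where twin: "k < m" "k \<noteq> i" "x k = x i" using twin_exists[OF i twins] .
  note L = score_tendsto_at_left[where c = c, OF i twin]
    and R = score_tendsto_at_right[where c = c, OF i twin]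
  have "0 \<le> x i" using nash i unfolding nash_eq_def is_profile_def by auto
  show ?thesis
  proof (cases "0 < x i")
    case False
    have "integral {0..1} (left_limit_points c m x i) \<le> integral {0..1} (right_limit_points c m x i)"
    proof (rule integral_le[OF L(1) R(1)])
      fix y :: real assume "y \<in> {0..1}"
      with False \<open>0 \<le> x i\<close> show "left_limit_points c m x i y \<le> right_limit_points c m x i y"
        by (intro left_limit_points_le_right[OF c]) simp
    qed
    with integral_limit_points_sum[OF twins L(1) R(1)] show ?thesis by linarith
  qed (rule nash_eq_limit_at_left_le[OF nash i _ L(2)])
qed

lemma nash_eq_right_limit_le_score:
  assumes c: "0 \<le> c" and nash: "nash_eq c m x" and i: "i < m"
    and twins: "card {j. j < m \<and> x j = x i} = 2"
  shows "integral {0..1} (right_limit_points c m x i) \<le> score c m x i"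
proof -
  obtain k where twin: "k < m" "k \<noteq> i" "x k = x i" using twin_exists[OF i twins] .
  note L = score_tendsto_at_left[where c = c, OF i twin]
    and R = score_tendsto_at_right[where c = c, OF i twin]
  have "x i \<le> 1" using nash i unfolding nash_eq_def is_profile_def by auto
  show ?thesis
  proof (cases "x i < 1")
    case False
    have "integral {0..1} (right_limit_points c m x i) \<le> integral {0..1} (left_limit_points c m x i)"
    proof (rule integral_le[OF R(1) L(1)])
      fix y :: real assume "y \<in> {0..1}"
      with False \<open>x i \<le> 1\<close> show "right_limit_points c m x i y \<le> left_limit_points c m x i y"
        by (intro right_limit_points_le_left[OF c]) simp
    qed
    with integral_limit_points_sum[OF twins L(1) R(1)] show ?thesis by linarith
  qed (rule nash_eq_limit_at_right_le[OF nash i _ R(2)])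
qed

theorem lemma2:
  fixes c :: real and m :: nat and x :: "nat \<Rightarrow> real" and i :: nat
  assumes "c \<ge> 0" and "m \<ge> 2"
    and "is_profile m x"
    and "card (x ` {..<m}) \<ge> 2"
    and "i < m"
    and "card {j. j < m \<and> x j = x i} = 2"
  shows "(\<exists>a b. ((\<lambda>t. score c m (x(i := t)) i) \<longlongrightarrow> a) (at_left (x i)) \<and>
                ((\<lambda>t. score c m (x(i := t)) i) \<longlongrightarrow> b) (at_right (x i)) \<and>
                a + b = 2 * score c m x i)
       \<and> (nash_eq c m x \<and> non_convergent m x \<longrightarrow>
            ((\<lambda>t. score c m (x(i := t)) i) \<longlongrightarrow> score c m x i) (at_left (x i)) \<and>
            ((\<lambda>t. score c m (x(i := t)) i) \<longlongrightarrow> score c m x i) (at_right (x i)))"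
proof -
  note c = assms(1) and i = assms(5) and twins = assms(6)
  obtain k where twin: "k < m" "k \<noteq> i" "x k = x i" using twin_exists[OF i twins] .
  note L = score_tendsto_at_left[where c = c, OF i twin]
    and R = score_tendsto_at_right[where c = c, OF i twin]
  let ?a = "integral {0..1} (left_limit_points c m x i)"
  let ?b = "integral {0..1} (right_limit_points c m x i)"
  have sum: "?a + ?b = 2 * score c m x i"
    by (rule integral_limit_points_sum[OF twins L(1) R(1)])
  show ?thesis
  proof (intro conjI impI)
    show "\<exists>a b. ((\<lambda>t. score c m (x(i := t)) i) \<longlongrightarrow> a) (at_left (x i)) \<and>
                ((\<lambda>t. score c m (x(i := t)) i) \<longlongrightarrow> b) (at_right (x i)) \<and>
                a + b = 2 * score c m x i"
      using L(2) R(2) sum by blast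
    assume "nash_eq c m x \<and> non_convergent m x"
    then have "?a \<le> score c m x i" "?b \<le> score c m x i"
      using nash_eq_left_limit_le_score[OF c _ i twins] nash_eq_right_limit_le_score[OF c _ i twins]
      by blast+
    with sum have "?a = score c m x i" "?b = score c m x i" by linarith+
    with L(2) R(2) show
      "((\<lambda>t. score c m (x(i := t)) i) \<longlongrightarrow> score c m x i) (at_left (x i))"
      "((\<lambda>t. score c m (x(i := t)) i) \<longlongrightarrow> score c m x i) (at_right (x i))"
      by simp_all
  qed
qed

end
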